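(* Consider a black-white array (BWA) storing at most $n=2^m-1$ values, and average the cost of searching for a value not present in it over the $n$ possible configurations $\mathtt{total}\in\{1,\dots,n\}$. This average time is $O(\log^2 n)$.
   Context: A black-white array (BWA) of size $N=2^K$ stores values from a totally ordered set. Its white array is $W[1..N-1]$. For $i\ge0$, the segment of rank $i$ is the index block $[2^i,2^{i+1}-1]$, of length $2^i$. A state variable $\mathtt{total}$ counts stored values. The rank-$i$ segment is active iff bit $i$ of $\mathtt{total}$ is $1$; thus the configuration of the BWA is determined by $\mathtt{total}$. Between operations, all stored values lie in the active white segments, each sorted ascending. Search$(v)$: for $i=K-1$ down to $0$, if the rank-$i$ segment is active, binary-search the white rank-$i$ segment for $v$. A binary search of a segment of length $L$ costs $O(\log L+1)$. Return the index at the first success, or Nil if none. An unsuccessful search therefore binary-searches every active segment. *)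

theory Defs
  imports Complex_Main "HOL-Library.Landau_Symbols"
begin

text \<open>BWA of size N = 2^K. The rank-i segment is active iff bit i of tot is 1.\<close>
definition seg_active :: "nat \<Rightarrow> nat \<Rightarrow> bool" where
  "seg_active tot i = bit tot i"

text \<open>Cost of an unsuccessful search in a BWA of size 2^K with the given total:
  every active segment (of length 2^i) is binary-searched; bs L is the cost
  of one binary search of a segment of length L.\<close>
definition unsucc_search_cost :: "(nat \<Rightarrow> real) \<Rightarrow> nat \<Rightarrow> nat \<Rightarrow> real" where
  "unsucc_search_cost bs K tot = (\<Sum>i \<in> {i. i < K \<and> seg_active tot i}. bs (2 ^ i))"

definition avg_unsucc_cost :: "(nat \<Rightarrow> real) \<Rightarrow> nat \<Rightarrow> real" where
  "avg_unsucc_cost bs m =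
     (\<Sum>t = 1..2 ^ m - 1. unsucc_search_cost bs m t) / real (2 ^ m - 1)"

end

theory Submission
  imports Defs "HOL-Real_Asymp.Real_Asymp"
begin

text \<open>An unsuccessful search in a BWA of size \<open>2^K\<close> binary-searches at most \<open>K\<close> segments,
  each of length at most \<open>2^K\<close> and hence at cost \<open>O(K)\<close>; so it costs \<open>O(K^2)\<close> in every
  configuration, and so does the average. Finally \<open>m\<close> is \<open>O(log\<^sub>2 (2^m - 1))\<close>.\<close>

lemma unsucc_search_cost_nonneg:
  assumes "\<forall>L\<ge>1. 0 \<le> bs L"
  shows "0 \<le> unsucc_search_cost bs K t"
  unfolding unsucc_search_cost_def using assms by (intro sum_nonneg) simp

lemma unsucc_search_cost_le_square:
  fixes bs :: "nat \<Rightarrow> real"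
  assumes "\<forall>L\<ge>1. 0 \<le> bs L \<and> bs L \<le> C * (log 2 (real L) + 1)"
  shows "unsucc_search_cost bs K t \<le> C * real K ^ 2"
proof -
  have "0 \<le> C"
    using assms[rule_format, of 1] by simp
  have segment_le: "bs (2 ^ i) \<le> C * real K" if "i < K" for i
  proof -
    have "bs (2 ^ i) \<le> C * (log 2 (real ((2::nat) ^ i)) + 1)"
      using assms[rule_format, of "2 ^ i"] by simp
    also have "\<dots> = C * (real i + 1)"
      by (simp add: log_nat_power)
    also have "\<dots> \<le> C * real K"
      using \<open>i < K\<close> \<open>0 \<le> C\<close> by (intro mult_left_mono) auto
    finally show ?thesis .
  qed
  have "unsucc_search_cost bs K t \<le> (\<Sum>i<K. bs (2 ^ i))"
    unfolding unsucc_search_cost_def using assms by (intro sum_mono2) auto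
  also have "\<dots> \<le> (\<Sum>i<K. C * real K)"
    using segment_le by (intro sum_mono) simp
  also have "\<dots> = C * real K ^ 2"
    by (simp add: power2_eq_square)
  finally show ?thesis .
qed

lemma avg_unsucc_cost_bounds:
  assumes "\<And>t. 0 \<le> unsucc_search_cost bs m t" and "\<And>t. unsucc_search_cost bs m t \<le> B"
  shows "0 \<le> avg_unsucc_cost bs m \<and> avg_unsucc_cost bs m \<le> B"
proof -
  let ?n = "2 ^ m - 1 :: nat"
  have "0 \<le> B"
    using assms order_trans by blast
  have "(\<Sum>t = 1..?n. unsucc_search_cost bs m t) \<le> real ?n * B"
    using sum_mono[of "{1..?n}", OF assms(2)] by simp
  moreover have "0 \<le> (\<Sum>t = 1..?n. unsucc_search_cost bs m t)"
    using assms(1) by (intro sum_nonneg)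
  ultimately show ?thesis
    unfolding avg_unsucc_cost_def using \<open>0 \<le> B\<close>
    by (cases "?n = 0") (simp_all add: pos_divide_le_eq mult.commute del: of_nat_diff)
qed

lemma nat_bigo_log2_pow2_minus_1: "(\<lambda>m. real m) \<in> O(\<lambda>m. log 2 (real (2 ^ m - 1)))"
  by (simp add: of_nat_diff) real_asymp

theorem mainTheorem10:
  fixes bs :: "nat \<Rightarrow> real" and C :: real
  assumes "\<forall>L\<ge>1. 0 \<le> bs L \<and> bs L \<le> C * (log 2 (real L) + 1)"
  shows "(\<lambda>m. avg_unsucc_cost bs m) \<in> O(\<lambda>m. (log 2 (real (2 ^ m - 1))) ^ 2)"
proof -
  have "avg_unsucc_cost bs m \<le> C * real m ^ 2" "0 \<le> avg_unsucc_cost bs m" for m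
    using avg_unsucc_cost_bounds[OF unsucc_search_cost_nonneg unsucc_search_cost_le_square]
      assms by auto
  then have "(\<lambda>m. avg_unsucc_cost bs m) \<in> O(\<lambda>m. real m ^ 2)"
    by (intro bigoI[where c = C]) auto
  also have "(\<lambda>m. real m ^ 2) \<in> O(\<lambda>m. (log 2 (real (2 ^ m - 1))) ^ 2)"
    by (rule landau_o.big_power[OF nat_bigo_log2_pow2_minus_1])
  finally show ?thesis .
qed

end
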